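(* Let $X$ be sampled uniformly at random from $\{0,1,2,3\}^n$. Then $\Pr[X \text{ is regular}]\ge 7/8$.
   Context: Logarithms are base $2$. Define $w(0)=0$, $w(1)=1$, $w(2)=2\log n+11$, $w(3)=2\log n+12$. A string $x\in\{0,1,2,3\}^n$ is regular if for every symbol $a\in\{0,1,2,3\}$ and all $1\le j\le k\le n$ such that some $i\in[j,k]$ has $x_i\ne a$, it holds that $\sum_{i=j}^k (w(x_i)-w(a))\neq 0$. *)

theory Defs
  imports "HOL-Probability.Probability"
begin

definition wt :: "nat \<Rightarrow> nat \<Rightarrow> real" where
  "wt n a = (if a = 0 then 0 else if a = 1 then 1
             else if a = 2 then 2 * log 2 (real n) + 11
             else 2 * log 2 (real n) + 12)"

text \<open>Strings in {0,1,2,3}^n as lists of length n (0-indexed positions).\<close>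
definition strings :: "nat \<Rightarrow> nat list set" where
  "strings n = {xs. length xs = n \<and> set xs \<subseteq> {0..3}}"

definition regular :: "nat list \<Rightarrow> bool" where
  "regular xs = (let n = length xs in
     \<forall>a \<in> {0..3::nat}. \<forall>j k. j \<le> k \<and> k < n \<and> (\<exists>i\<in>{j..k}. xs ! i \<noteq> a) \<longrightarrow>
        (\<Sum>i=j..k. wt n (xs ! i) - wt n a) \<noteq> 0)"

end

theory Submission
  imports Defs "HOL-Library.Sublist" "HOL-Library.Log_Nat"
begin

text \<open>
  Call the symbols 0, 1 light and 2, 3 heavy. For a = 0 or a = 3, and for a = 1 (a = 2) on a
  segment without heavy (light) symbols, all summands w(x_i) - w(a) have the same sign. Otherwise,
  relative to a = 1, every heavy symbol contributes at least 2 log n + 10 and every light one at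
  least -1; if no r consecutive symbols are light, each heavy symbol is followed by fewer than r
  light ones, so the sum is positive once r < log n + 6 (symmetrically for a = 2). With
  r = ceil (log n) + 4, a union bound over the n starting positions shows that r consecutive light
  (or heavy) symbols occur with probability at most n 2^-r \<le> 1/16 each.
\<close>

definition has_run :: "'a set \<Rightarrow> nat \<Rightarrow> 'a list \<Rightarrow> bool" where
  "has_run S r xs \<longleftrightarrow> (\<exists>ys. sublist ys xs \<and> length ys = r \<and> set ys \<subseteq> S)"

lemma has_run_mono_sublist: "has_run S r ys \<Longrightarrow> sublist ys xs \<Longrightarrow> has_run S r xs"
  unfolding has_run_def using sublist_order.order.trans by blast

lemma length_takeWhile_less_if_no_run:
  assumes "\<not> has_run S r xs"
  shows "length (takeWhile (\<lambda>x. x \<in> S) xs) < r"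
proof (rule ccontr)
  let ?ys = "take r (takeWhile (\<lambda>x. x \<in> S) xs)"
  assume long: "\<not> ?thesis"
  have "has_run S r xs"
    unfolding has_run_def
  proof (intro exI conjI)
    show "sublist ?ys xs"
      by (meson sublist_take sublist_takeWhile sublist_order.order.trans)
    show "length ?ys = r"
      using long by simp
    show "set ?ys \<subseteq> S"
      by (meson in_set_takeD set_takeWhileD subsetI)
  qed
  with assms show False by contradiction
qed

text \<open>Each element outside S pays for the run of elements of S following it; the initial run,
  which nothing pays for, is the takeWhile term.\<close>

lemma sum_list_lower_bound_if_no_run:
  fixes f :: "'a \<Rightarrow> real"
  assumes "\<forall>x\<in>set xs. x \<in> S \<longrightarrow> -1 \<le> f x" and "\<forall>x\<in>set xs. x \<notin> S \<longrightarrow> D \<le> f x"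
    and "\<not> has_run S r xs"
  shows "(D - (real r - 1)) * length (filter (\<lambda>x. x \<notin> S) xs)
           \<le> (\<Sum>x\<leftarrow>xs. f x) + length (takeWhile (\<lambda>x. x \<in> S) xs)"
  using assms
proof (induction xs)
  case Nil
  then show ?case by simp
next
  case (Cons x xs)
  have "sublist xs (x # xs)"
    by (simp add: sublist_Cons_right)
  with Cons.prems(3) have no_run: "\<not> has_run S r xs"
    using has_run_mono_sublist by blast
  with Cons.IH Cons.prems(1,2) have IH: "(D - (real r - 1)) * length (filter (\<lambda>x. x \<notin> S) xs)
           \<le> (\<Sum>x\<leftarrow>xs. f x) + length (takeWhile (\<lambda>x. x \<in> S) xs)"
    by simp
  show ?case
  proof (cases "x \<in> S")
    case True
    then show ?thesis using IH Cons.prems(1) by simp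
  next
    case False
    have "real (length (takeWhile (\<lambda>x. x \<in> S) xs)) \<le> real r - 1"
      using length_takeWhile_less_if_no_run[OF no_run] by linarith
    then show ?thesis using IH Cons.prems(2) False by (simp add: algebra_simps)
  qed
qed

lemma sum_list_pos_if_no_run:
  fixes f :: "'a \<Rightarrow> real"
  assumes "\<forall>x\<in>set xs. x \<in> S \<longrightarrow> -1 \<le> f x" and "\<forall>x\<in>set xs. x \<notin> S \<longrightarrow> D \<le> f x"
    and "\<not> has_run S r xs" and "\<not> set xs \<subseteq> S" and "2 * (real r - 1) < D"
  shows "0 < (\<Sum>x\<leftarrow>xs. f x)"
proof -
  let ?heavy = "length (filter (\<lambda>x. x \<notin> S) xs)"
  let ?prefix = "length (takeWhile (\<lambda>x. x \<in> S) xs)"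
  have "1 \<le> real ?heavy"
    using assms(4) by (auto simp: Suc_le_eq filter_empty_conv length_greater_0_conv[symmetric])
  moreover have "?prefix < r"
    using length_takeWhile_less_if_no_run[OF assms(3)] .
  then have prefix: "real ?prefix \<le> real r - 1" and "0 < r"
    by linarith+
  with assms(5) have "0 < D - (real r - 1)"
    by simp
  ultimately have "D - (real r - 1) \<le> (D - (real r - 1)) * ?heavy"
    by (simp add: mult_le_cancel_left1)
  then have "D - 2 * (real r - 1) \<le> (D - (real r - 1)) * ?heavy - ?prefix"
    using prefix by (simp add: algebra_simps)
  also have "\<dots> \<le> (\<Sum>x\<leftarrow>xs. f x)"
    using sum_list_lower_bound_if_no_run[OF assms(1-3)] by linarith
  finally show ?thesis
    using assms(5) by linarith
qed

lemma sum_list_diff_neq_0_if_one_sided: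
  fixes f :: "'a::linorder \<Rightarrow> 'b::linordered_ab_group_add"
  assumes "strict_mono_on A f" "set ys \<subseteq> A" "a \<in> A" "\<not> set ys \<subseteq> {a}"
    and "(\<forall>y\<in>set ys. a \<le> y) \<or> (\<forall>y\<in>set ys. y \<le> a)"
  shows "(\<Sum>y\<leftarrow>ys. f y - f a) \<noteq> 0"
proof -
  obtain b where b: "b \<in> set ys" "b \<noteq> a" using assms(4) by blast
  then have fb: "f b \<noteq> f a"
    using strict_mono_on_eqD[OF assms(1)] assms(2,3) by blast
  from assms(5) show ?thesis
  proof
    assume "\<forall>y\<in>set ys. a \<le> y"
    then have "f a \<le> f y" if "y \<in> set ys" for y
      using that assms(2) by (intro strict_mono_on_leD[OF assms(1,3)]) auto
    then show ?thesis
      using b fb by (subst sum_list_nonneg_eq_0_iff) (auto intro!: bexI[of _ b])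
  next
    assume "\<forall>y\<in>set ys. y \<le> a"
    then have "f y \<le> f a" if "y \<in> set ys" for y
      using that assms(2) by (intro strict_mono_on_leD[OF assms(1) _ assms(3)]) auto
    then have "(\<Sum>y\<leftarrow>ys. f a - f y) \<noteq> 0"
      using b fb by (subst sum_list_nonneg_eq_0_iff) (auto intro!: bexI[of _ b])
    moreover have "(\<Sum>y\<leftarrow>ys. f y - f a) = - (\<Sum>y\<leftarrow>ys. f a - f y)"
      by (simp add: uminus_sum_list_map o_def)
    ultimately show ?thesis
      by simp
  qed
qed

lemma strict_mono_on_wt: "strict_mono_on {0..3} (wt n)"
proof -
  have "0 \<le> log 2 (real n)"
    by (cases "n = 0") (auto simp: log_def)
  moreover have "{0..3::nat} = {0, 1, 2, 3}"
    by auto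
  ultimately show ?thesis
    by (auto simp: strict_mono_on_def wt_def)
qed

lemma regularI:
  assumes "\<And>a ys. a \<le> 3 \<Longrightarrow> sublist ys xs \<Longrightarrow> \<not> set ys \<subseteq> {a} \<Longrightarrow>
             (\<Sum>y\<leftarrow>ys. wt (length xs) y - wt (length xs) a) \<noteq> 0"
  shows "regular xs"
  unfolding regular_def Let_def
proof (intro ballI allI impI)
  fix a j k
  assume "a \<in> {0..3::nat}" and jk: "j \<le> k \<and> k < length xs \<and> (\<exists>i\<in>{j..k}. xs ! i \<noteq> a)"
  define ys where "ys = map (nth xs) [j..<Suc k]"
  have "ys = take (Suc k - j) (drop j xs)"
    using jk by (auto simp: ys_def list_eq_iff_nth_eq min_def simp del: upt_Suc)
  then have "sublist ys xs"
    by (metis sublist_drop sublist_take sublist_order.order.trans)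
  moreover obtain i where "i \<in> {j..k}" and "xs ! i \<noteq> a"
    using jk by blast
  then have "xs ! i \<in> set ys"
    unfolding ys_def set_map set_upt by (intro imageI) auto
  with \<open>xs ! i \<noteq> a\<close> have "\<not> set ys \<subseteq> {a}"
    by blast
  ultimately have "(\<Sum>y\<leftarrow>ys. wt (length xs) y - wt (length xs) a) \<noteq> 0"
    using assms \<open>a \<in> {0..3}\<close> by simp
  moreover have "(\<Sum>y\<leftarrow>ys. wt (length xs) y - wt (length xs) a)
      = (\<Sum>i=j..k. wt (length xs) (xs ! i) - wt (length xs) a)"
    unfolding ys_def
    by (simp only: map_map comp_def interv_sum_list_conv_sum_set_nat set_upt
        atLeastLessThanSuc_atLeastAtMost)
  ultimately show "(\<Sum>i=j..k. wt (length xs) (xs ! i) - wt (length xs) a) \<noteq> 0"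
    by simp
qed

lemma sum_wt_minus_wt_1_pos:
  assumes "set ys \<subseteq> {0..3}" and "\<not> set ys \<subseteq> {0, 1}" and "\<not> has_run {0, 1} r ys"
    and "real r < log 2 (real n) + 6"
  shows "0 < (\<Sum>y\<leftarrow>ys. wt n y - wt n 1)"
proof (rule sum_list_pos_if_no_run[OF _ _ assms(3,2), where D = "2 * log 2 (real n) + 10"])
  have "\<forall>y\<in>set ys. y = 0 \<or> y = 1 \<or> y = 2 \<or> y = 3"
    using assms(1) by auto
  then show "\<forall>y\<in>set ys. y \<in> {0, 1} \<longrightarrow> -1 \<le> wt n y - wt n 1"
    and "\<forall>y\<in>set ys. y \<notin> {0, 1} \<longrightarrow> 2 * log 2 (real n) + 10 \<le> wt n y - wt n 1"
    by (auto simp: wt_def)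
  show "2 * (real r - 1) < 2 * log 2 (real n) + 10"
    using assms(4) by simp
qed

lemma sum_wt_minus_wt_2_neg:
  assumes "set ys \<subseteq> {0..3}" and "\<not> set ys \<subseteq> {2, 3}" and "\<not> has_run {2, 3} r ys"
    and "real r < log 2 (real n) + 6"
  shows "(\<Sum>y\<leftarrow>ys. wt n y - wt n 2) < 0"
proof -
  have "0 < (\<Sum>y\<leftarrow>ys. wt n 2 - wt n y)"
  proof (rule sum_list_pos_if_no_run[OF _ _ assms(3,2), where D = "2 * log 2 (real n) + 10"])
    have "\<forall>y\<in>set ys. y = 0 \<or> y = 1 \<or> y = 2 \<or> y = 3"
      using assms(1) by auto
    then show "\<forall>y\<in>set ys. y \<in> {2, 3} \<longrightarrow> -1 \<le> wt n 2 - wt n y"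
      and "\<forall>y\<in>set ys. y \<notin> {2, 3} \<longrightarrow> 2 * log 2 (real n) + 10 \<le> wt n 2 - wt n y"
      by (auto simp: wt_def)
    show "2 * (real r - 1) < 2 * log 2 (real n) + 10"
      using assms(4) by simp
  qed
  moreover have "(\<Sum>y\<leftarrow>ys. wt n y - wt n 2) = - (\<Sum>y\<leftarrow>ys. wt n 2 - wt n y)"
    by (simp add: uminus_sum_list_map o_def)
  ultimately show ?thesis
    by simp
qed

lemma sum_wt_minus_wt_neq_0:
  assumes "set ys \<subseteq> {0..3}" and "a \<le> 3" and "\<not> set ys \<subseteq> {a}"
    and "real r < log 2 (real n) + 6"
    and "\<not> has_run {0, 1} r ys" and "\<not> has_run {2, 3} r ys"
  shows "(\<Sum>y\<leftarrow>ys. wt n y - wt n a) \<noteq> 0"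
proof (cases "a = 0 \<or> a = 3 \<or> a = 1 \<and> set ys \<subseteq> {0, 1} \<or> a = 2 \<and> set ys \<subseteq> {2, 3}")
  case True
  with assms(1) have "(\<forall>y\<in>set ys. a \<le> y) \<or> (\<forall>y\<in>set ys. y \<le> a)"
    by fastforce
  with assms(1-3) show ?thesis
    using sum_list_diff_neq_0_if_one_sided[OF strict_mono_on_wt] by simp
next
  case False
  with assms(2) have "a = 1 \<and> \<not> set ys \<subseteq> {0, 1} \<or> a = 2 \<and> \<not> set ys \<subseteq> {2, 3}"
    by linarith
  then show ?thesis
    using sum_wt_minus_wt_1_pos[OF assms(1) _ assms(5,4)] sum_wt_minus_wt_2_neg[OF assms(1) _ assms(6,4)]
    by fastforce
qed

lemma regular_if_no_long_runs:
  assumes "xs \<in> strings n" and "real r < log 2 (real n) + 6"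
    and "\<not> has_run {0, 1} r xs" and "\<not> has_run {2, 3} r xs"
  shows "regular xs"
proof (rule regularI)
  fix a ys
  assume "a \<le> 3" and "sublist ys xs" and "\<not> set ys \<subseteq> {a}"
  from assms(1) have "length xs = n" and "set xs \<subseteq> {0..3}"
    by (auto simp: strings_def)
  with \<open>sublist ys xs\<close> have "set ys \<subseteq> {0..3}"
    using set_mono_sublist by blast
  moreover have "\<not> has_run {0, 1} r ys" and "\<not> has_run {2, 3} r ys"
    using assms(3,4) has_run_mono_sublist \<open>sublist ys xs\<close> by blast+
  ultimately show "(\<Sum>y\<leftarrow>ys. wt (length xs) y - wt (length xs) a) \<noteq> 0"
    using sum_wt_minus_wt_neq_0 \<open>a \<le> 3\<close> \<open>\<not> set ys \<subseteq> {a}\<close> assms(2) \<open>length xs = n\<close>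
    by blast
qed

lemma card_lists_has_run_le:
  assumes "finite A" and "S \<subseteq> A"
  shows "card {xs. set xs \<subseteq> A \<and> length xs = n \<and> has_run S r xs}
           \<le> (n + 1 - r) * card S ^ r * card A ^ (n - r)"
proof -
  let ?L = "\<lambda>B m. {xs. set xs \<subseteq> B \<and> length xs = m}"
  define W where "W i = (\<lambda>(u, v, w). u @ v @ w) ` (?L A i \<times> ?L S r \<times> ?L A (n - r - i))" for i
  have "finite S"
    using assms finite_subset by blast
  have cover: "{xs. set xs \<subseteq> A \<and> length xs = n \<and> has_run S r xs} \<subseteq> (\<Union>i<n + 1 - r. W i)"
  proof
    fix xs
    assume "xs \<in> {xs. set xs \<subseteq> A \<and> length xs = n \<and> has_run S r xs}"
    then obtain ps ys ss where xs: "xs = ps @ ys @ ss" "set xs \<subseteq> A" "length xs = n"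
      and ys: "length ys = r" "set ys \<subseteq> S"
      unfolding has_run_def sublist_def by blast
    then have "(ps, ys, ss) \<in> ?L A (length ps) \<times> ?L S r \<times> ?L A (n - r - length ps)"
      by auto
    then have "xs \<in> W (length ps)"
      unfolding W_def xs(1) by (rule rev_image_eqI) simp
    moreover have "length ps < n + 1 - r"
      using xs ys by auto
    ultimately show "xs \<in> (\<Union>i<n + 1 - r. W i)"
      by blast
  qed
  have card_W: "card (W i) \<le> card S ^ r * card A ^ (n - r)" if "i < n + 1 - r" for i
  proof -
    have "card (W i) \<le> card (?L A i \<times> ?L S r \<times> ?L A (n - r - i))"
      unfolding W_def using assms(1) \<open>finite S\<close>
      by (intro card_image_le) (simp add: finite_lists_length_eq)
    also have "\<dots> = card S ^ r * (card A ^ i * card A ^ (n - r - i))"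
      using assms(1) \<open>finite S\<close> by (simp add: card_cartesian_product card_lists_length_eq)
    also have "\<dots> = card S ^ r * card A ^ (n - r)"
      using that by (simp flip: power_add)
    finally show ?thesis .
  qed
  have "finite (W i)" for i
    unfolding W_def using assms(1) \<open>finite S\<close> by (simp add: finite_lists_length_eq)
  then have "card {xs. set xs \<subseteq> A \<and> length xs = n \<and> has_run S r xs} \<le> card (\<Union>i<n + 1 - r. W i)"
    by (intro card_mono[OF _ cover]) auto
  also have "\<dots> \<le> (\<Sum>i<n + 1 - r. card (W i))"
    by (rule card_UN_le) simp
  also have "\<dots> \<le> (\<Sum>i<n + 1 - r. card S ^ r * card A ^ (n - r))"
    using card_W by (intro sum_mono) simp
  finally show ?thesis
    by simp
qed

lemma card_strings_has_run_le:
  assumes "S \<subseteq> {0..3}" and "card S = 2" and "0 < r"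
  shows "card {xs \<in> strings n. has_run S r xs} * 2 ^ r \<le> n * 4 ^ n"
proof -
  have "{xs \<in> strings n. has_run S r xs} = {xs. set xs \<subseteq> {0..3} \<and> length xs = n \<and> has_run S r xs}"
    by (auto simp: strings_def)
  then have "card {xs \<in> strings n. has_run S r xs} * 2 ^ r \<le> (n + 1 - r) * 2 ^ r * 4 ^ (n - r) * 2 ^ r"
    using card_lists_has_run_le[of "{0..3}" S n r] assms(1,2) by simp
  also have "\<dots> \<le> n * 4 ^ n"
  proof (cases "r \<le> n")
    case True
    have "(n + 1 - r) * 2 ^ r * 4 ^ (n - r) * 2 ^ r = (n + 1 - r) * (4 ^ r * 4 ^ (n - r))"
      by (simp add: power_mult_distrib[symmetric] mult_ac)
    also have "\<dots> = (n + 1 - r) * 4 ^ n"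
      using True by (simp flip: power_add)
    also have "\<dots> \<le> n * 4 ^ n"
      using assms(3) by simp
    finally show ?thesis .
  qed simp
  finally show ?thesis .
qed

lemma finite_strings: "finite (strings n)"
  and card_strings: "card (strings n) = 4 ^ n"
  using finite_lists_length_eq[of "{0..3::nat}" n] card_lists_length_eq[of "{0..3::nat}" n]
  by (simp_all add: strings_def conj_commute)

lemma card_strings_not_regular_le: "card (strings n - {xs. regular xs}) * 8 \<le> 4 ^ n"
proof -
  define r where "r = ceillog2 n + 4"
  define bad where "bad S = {xs \<in> strings n. has_run S r xs}" for S
  have "real (ceillog2 n) < log 2 (real n) + 1"
    using ceillog2_less_log[of n] by (cases "n = 0") (auto simp: log_def)
  then have "strings n - {xs. regular xs} \<subseteq> bad {0, 1} \<union> bad {2, 3}"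
    using regular_if_no_long_runs[of _ n r] unfolding bad_def r_def by auto
  then have "card (strings n - {xs. regular xs}) \<le> card (bad {0, 1} \<union> bad {2, 3})"
    by (rule card_mono[rotated]) (simp add: bad_def finite_strings)
  also have "\<dots> \<le> card (bad {0, 1}) + card (bad {2, 3})"
    by (rule card_Un_le)
  finally have card_le: "card (strings n - {xs. regular xs}) \<le> card (bad {0, 1}) + card (bad {2, 3})" .
  have bad_small: "card (bad S) * 16 \<le> 4 ^ n" if "S \<subseteq> {0..3}" and "card S = 2" for S
  proof -
    have "card (bad S) * 16 * 2 ^ ceillog2 n = card (bad S) * 2 ^ r"
      by (simp add: r_def power_add)
    also have "\<dots> \<le> n * 4 ^ n"
      using card_strings_has_run_le[OF that] unfolding bad_def r_def by simp
    also have "\<dots> \<le> 2 ^ ceillog2 n * 4 ^ n"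
      using le_two_power_ceillog2[of n] by simp
    finally show ?thesis
      by simp
  qed
  then have "card (bad {0, 1}) * 16 \<le> 4 ^ n" and "card (bad {2, 3}) * 16 \<le> 4 ^ n"
    by auto
  with card_le show ?thesis
    by linarith
qed

theorem lemma2:
  fixes n :: nat
  shows "measure_pmf.prob (pmf_of_set (strings n)) {xs. regular xs} \<ge> 7/8"
proof -
  have "strings n \<noteq> {}"
    using card_strings[of n] by auto
  have "card (strings n) = card (strings n \<inter> {xs. regular xs}) + card (strings n - {xs. regular xs})"
    by (rule card_Int_Diff[OF finite_strings])
  with card_strings_not_regular_le[of n]
  have "7 * 4 ^ n \<le> 8 * card (strings n \<inter> {xs. regular xs})"
    unfolding card_strings by simp
  then have "real (7 * 4 ^ n) \<le> real (8 * card (strings n \<inter> {xs. regular xs}))"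
    by (rule of_nat_mono)
  then have "7 / 8 \<le> real (card (strings n \<inter> {xs. regular xs})) / 4 ^ n"
    by (simp add: field_simps)
  also have "\<dots> = measure_pmf.prob (pmf_of_set (strings n)) {xs. regular xs}"
    using measure_pmf_of_set[OF \<open>strings n \<noteq> {}\<close> finite_strings] card_strings by simp
  finally show ?thesis .
qed

end
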